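(* For every approval-based multi-winner election $\sigma=\langle\mathcal V,\mathcal C,S,B\rangle$, every non-empty $\mathcal A\subseteq\mathcal C$ and every $F\in\mathfrak F^{\mathrm{opt}}_{\sigma,\mathcal A}$, there exists a non-empty $\mathcal K\subseteq\mathcal A$ with the following two properties: 1. $\mathrm{Supp}_F(c)=\mathrm{maxMin}(\sigma,\mathcal A)$ for every $c\in\mathcal K$; 2. $F(y,c)=0$ for every $c\in\mathcal A\setminus\mathcal K$ and every $y\in2^{\mathcal C}$ with $y\cap\mathcal K\neq\emptyset$.
   Context: An approval-based multi-winner election is a tuple $\sigma=\langle \mathcal V,\mathcal C,S,B\rangle$, where $\mathcal V$ is a finite set of agents, $\mathcal C$ is a finite set of candidates, $1\le S\le|\mathcal C|$ is an integer, and $B:2^{\mathcal C}\to\mathbb N$ gives, for each $\mathcal A\subseteq\mathcal C$, the number $B(\mathcal A)$ of agents whose ballot is exactly $\mathcal A$ (with $\sum_{\mathcal A}B(\mathcal A)\le|\mathcal V|$). For a non-empty $\mathcal A\subseteq\mathcal C$, the family $\mathfrak F_{\sigma,\mathcal A}$ is the set of all $F:2^{\mathcal C}\times\mathcal A\to\mathbb R$ such that: - $F(y,c)\ge0$ for all $y$ and $c$; - $F(y,c)=0$ if $c\notin y$; - $\sum_{c\in\mathcal A\cap y}F(y,c)=B(y)$ whenever $y\cap\mathcal A\neq\emptyset$. We write $\mathrm{Supp}_F(c)=\sum_yF(y,c)$ and $\mathrm{maxMin}(\sigma,\mathcal A)=\sup_{F\in\mathfrak F_{\sigma,\mathcal A}}\min_{c\in\mathcal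 A}\mathrm{Supp}_F(c)$. We also write $\mathfrak F^{\mathrm{opt}}_{\sigma,\mathcal A}=\{F\in\mathfrak F_{\sigma,\mathcal A}:\mathrm{Supp}_F(c)\ge\mathrm{maxMin}(\sigma,\mathcal A)\ \forall c\in\mathcal A\}$. *)

theory Defs
  imports "HOL-Analysis.Analysis"
begin

text \<open>An approval-based multi-winner election: agents V, candidates C, committee
size S, and ballot counts B (B y = number of agents whose ballot is exactly y).\<close>

definition election :: "'v set \<Rightarrow> 'c set \<Rightarrow> nat \<Rightarrow> ('c set \<Rightarrow> nat) \<Rightarrow> bool" where
  "election V C S B \<longleftrightarrow> finite V \<and> finite C \<and> 1 \<le> S \<and> S \<le> card C
     \<and> (\<forall>y. \<not> y \<subseteq> C \<longrightarrow> B y = 0)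
     \<and> (\<Sum>y\<in>Pow C. B y) \<le> card V"

text \<open>The family F_{sigma,A}; F is a function on 2^C x A (values outside this
domain are irrelevant and unconstrained).\<close>

definition Fam :: "'c set \<Rightarrow> ('c set \<Rightarrow> nat) \<Rightarrow> 'c set \<Rightarrow> ('c set \<Rightarrow> 'c \<Rightarrow> real) set" where
  "Fam C B A = {F. (\<forall>y\<in>Pow C. \<forall>c\<in>A. F y c \<ge> 0)
     \<and> (\<forall>y\<in>Pow C. \<forall>c\<in>A. c \<notin> y \<longrightarrow> F y c = 0)
     \<and> (\<forall>y\<in>Pow C. y \<inter> A \<noteq> {} \<longrightarrow> (\<Sum>c\<in>A \<inter> y. F y c) = real (B y))}"

definition Supp :: "'c set \<Rightarrow> ('c set \<Rightarrow> 'c \<Rightarrow> real) \<Rightarrow> 'c \<Rightarrow> real" where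
  "Supp C F c = (\<Sum>y\<in>Pow C. F y c)"

definition maxMin :: "'c set \<Rightarrow> ('c set \<Rightarrow> nat) \<Rightarrow> 'c set \<Rightarrow> real" where
  "maxMin C B A = (SUP F\<in>Fam C B A. Min ((\<lambda>c. Supp C F c) ` A))"

definition Fopt :: "'c set \<Rightarrow> ('c set \<Rightarrow> nat) \<Rightarrow> 'c set \<Rightarrow> ('c set \<Rightarrow> 'c \<Rightarrow> real) set" where
  "Fopt C B A = {F\<in>Fam C B A. \<forall>c\<in>A. Supp C F c \<ge> maxMin C B A}"

end

theory Submission
  imports Defs
begin

text \<open>Suppose no such \<open>K\<close> exists. Starting from \<open>F\<close>, repeatedly pick a tight
candidate \<open>t\<close> (one with support exactly \<open>maxMin\<close>) and a non-tight candidate \<open>c\<close>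
that shares a ballot with it and receives weight from that ballot; shifting a small amount of
that weight from \<open>c\<close> to \<open>t\<close> keeps the allocation feasible and everybody at
least at \<open>maxMin\<close>, but makes \<open>t\<close> non-tight without creating new tight candidates.
Since weights that are positive stay positive, the assumption keeps supplying such pairs, so
the tight set shrinks to nothing, producing an allocation whose minimum support exceeds
\<open>maxMin\<close>.\<close>

lemma Fam_nonneg: "G \<in> Fam C B A \<Longrightarrow> y \<in> Pow C \<Longrightarrow> c \<in> A \<Longrightarrow> 0 \<le> G y c"
  by (simp add: Fam_def)

lemma Fam_zero: "G \<in> Fam C B A \<Longrightarrow> y \<in> Pow C \<Longrightarrow> c \<in> A \<Longrightarrow> c \<notin> y \<Longrightarrow> G y c = 0"
  by (simp add: Fam_def)

lemma Fam_sum: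
  "G \<in> Fam C B A \<Longrightarrow> y \<in> Pow C \<Longrightarrow> y \<inter> A \<noteq> {} \<Longrightarrow> (\<Sum>c\<in>A \<inter> y. G y c) = real (B y)"
  by (simp add: Fam_def)

lemma Fam_le_ballot_count:
  assumes "finite C" "G \<in> Fam C B A" "y \<in> Pow C" "c \<in> A"
  shows "G y c \<le> real (B y)"
proof (cases "c \<in> y")
  case True
  have "finite (A \<inter> y)"
    using assms(1,3) by (meson PowD finite_Int finite_subset)
  then have "G y c \<le> (\<Sum>c'\<in>A \<inter> y. G y c')"
    using True assms(4) Fam_nonneg[OF assms(2,3)] by (intro member_le_sum) auto
  also have "\<dots> = real (B y)"
    using Fam_sum[OF assms(2,3)] True assms(4) by blast
  finally show ?thesis .
qed (use Fam_zero[OF assms(2-4)] in simp)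

lemma Min_Supp_le_maxMin:
  assumes "finite C" "A \<subseteq> C" "A \<noteq> {}" "G \<in> Fam C B A"
  shows "Min (Supp C G ` A) \<le> maxMin C B A"
proof -
  have finA: "finite A"
    using assms(1,2) finite_subset by blast
  obtain a where a: "a \<in> A"
    using assms(3) by blast
  have "Min (Supp C H ` A) \<le> (\<Sum>y\<in>Pow C. real (B y))" if H: "H \<in> Fam C B A" for H
  proof -
    have "Min (Supp C H ` A) \<le> Supp C H a"
      using finA a by simp
    also have "\<dots> \<le> (\<Sum>y\<in>Pow C. real (B y))"
      unfolding Supp_def using Fam_le_ballot_count[OF assms(1) H _ a] by (intro sum_mono) simp
    finally show ?thesis .
  qed
  then have "bdd_above ((\<lambda>H. Min (Supp C H ` A)) ` Fam C B A)"
    by (intro bdd_aboveI2)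
  then show ?thesis
    unfolding maxMin_def by (rule cSUP_upper[OF assms(4)])
qed

definition transfer ::
    "('c set \<Rightarrow> 'c \<Rightarrow> real) \<Rightarrow> 'c set \<Rightarrow> 'c \<Rightarrow> 'c \<Rightarrow> real \<Rightarrow> 'c set \<Rightarrow> 'c \<Rightarrow> real" where
  "transfer G y0 c t e =
     (\<lambda>y x. G y x + (if y = y0 then (if x = t then e else if x = c then - e else 0) else 0))"

lemma Supp_transfer:
  assumes "finite C" "y0 \<in> Pow C" "t \<noteq> c"
  shows "Supp C (transfer G y0 c t e) x
           = Supp C G x + (if x = t then e else if x = c then - e else 0)"
  using assms unfolding Supp_def transfer_def by (simp add: sum.distrib)

lemma transfer_in_Fam:
  assumes "finite C" "G \<in> Fam C B A" "y0 \<in> Pow C"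
    and "c \<in> A" "t \<in> A" "t \<noteq> c" "c \<in> y0" "t \<in> y0"
    and "0 \<le> e" "e \<le> G y0 c"
  shows "transfer G y0 c t e \<in> Fam C B A"
proof -
  have "(\<Sum>x\<in>A \<inter> y0. if x = t then e else if x = c then - e else 0) = 0"
  proof -
    have "finite (A \<inter> y0)"
      using assms(1,3) by (meson PowD finite_Int finite_subset)
    then show ?thesis
      using assms(4-8) by (simp add: if_distrib[of uminus] sum.If_cases Int_absorb2)
  qed
  then have "(\<Sum>x\<in>A \<inter> y. transfer G y0 c t e y x) = (\<Sum>x\<in>A \<inter> y. G y x)" for y
    unfolding transfer_def by (cases "y = y0") (simp_all add: sum.distrib)
  then show ?thesis
    using assms Fam_nonneg[OF assms(2)] Fam_zero[OF assms(2)] Fam_sum[OF assms(2)]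
    unfolding Fam_def[of C B A] by (auto simp: transfer_def)
qed

definition tight_set :: "'c set \<Rightarrow> ('c set \<Rightarrow> 'c \<Rightarrow> real) \<Rightarrow> 'c set \<Rightarrow> real \<Rightarrow> 'c set" where
  "tight_set C G A m = {c \<in> A. Supp C G c = m}"

lemma transfer_removes_tight:
  assumes fin: "finite C" and G: "G \<in> Fam C B A" and ge: "\<forall>x\<in>A. m \<le> Supp C G x"
    and t: "t \<in> tight_set C G A m" and c: "c \<in> A - tight_set C G A m"
    and y: "y \<in> Pow C" "t \<in> y" and pos: "0 < G y c"
  obtains G' where "G' \<in> Fam C B A" "\<forall>x\<in>A. m \<le> Supp C G' x"
    "tight_set C G' A m = tight_set C G A m - {t}"
    "\<forall>y\<in>Pow C. \<forall>x\<in>A. 0 < G y x \<longrightarrow> 0 < G' y x"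
proof -
  have tA: "t \<in> A" and tm: "Supp C G t = m" and cA: "c \<in> A" and cm: "m < Supp C G c"
    using t c ge by (auto simp: tight_set_def order_less_le)
  have tc: "t \<noteq> c"
    using t c by blast
  have cy: "c \<in> y"
    using Fam_zero[OF G y(1) cA] pos by force
  define e where "e = min (G y c) (Supp C G c - m) / 2"
  have e: "0 < e" "e < G y c" "e < Supp C G c - m"
    using pos cm unfolding e_def by auto
  define G' where "G' = transfer G y c t e"
  have Supp': "Supp C G' x = Supp C G x + (if x = t then e else if x = c then - e else 0)" for x
    unfolding G'_def using Supp_transfer[OF fin y(1) tc] .
  have "G' \<in> Fam C B A"
    unfolding G'_def using transfer_in_Fam[OF fin G y(1) cA tA tc cy y(2)] e by simp
  moreover have "\<forall>x\<in>A. m \<le> Supp C G' x"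
    using ge e tm by (auto simp: Supp')
  moreover have "tight_set C G' A m = tight_set C G A m - {t}"
    using e tm tc unfolding tight_set_def by (auto simp: Supp')
  moreover have "\<forall>y'\<in>Pow C. \<forall>x\<in>A. 0 < G y' x \<longrightarrow> 0 < G' y' x"
    using e tc by (auto simp: G'_def transfer_def)
  ultimately show thesis
    by (rule that)
qed

lemma Fam_Supp_gt_if_tight_sets_leak:
  assumes fin: "finite C" "finite A" and F: "F \<in> Fam C B A"
    and leak: "\<And>K. K \<noteq> {} \<Longrightarrow> K \<subseteq> tight_set C F A m \<Longrightarrow>
                 \<exists>c\<in>A - K. \<exists>y\<in>Pow C. y \<inter> K \<noteq> {} \<and> 0 < F y c"
    and G: "G \<in> Fam C B A" "\<forall>x\<in>A. m \<le> Supp C G x"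
    and tight: "tight_set C G A m \<subseteq> tight_set C F A m"
    and pos: "\<forall>y\<in>Pow C. \<forall>x\<in>A. 0 < F y x \<longrightarrow> 0 < G y x"
  shows "\<exists>G'\<in>Fam C B A. \<forall>x\<in>A. m < Supp C G' x"
  using G tight pos
proof (induction "card (tight_set C G A m)" arbitrary: G rule: less_induct)
  case (less G)
  show ?case
  proof (cases "tight_set C G A m = {}")
    case True
    then have "\<forall>x\<in>A. m < Supp C G x"
      using less.prems(2) unfolding tight_set_def by (auto simp: order_less_le)
    then show ?thesis
      using less.prems(1) by blast
  next
    case False
    then obtain c y where c: "c \<in> A - tight_set C G A m" and y: "y \<in> Pow C"
      and meets: "y \<inter> tight_set C G A m \<noteq> {}" and "0 < F y c"
      using leak[OF False less.prems(3)] by blast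
    then have "0 < G y c"
      using less.prems(4) by blast
    obtain t where t: "t \<in> tight_set C G A m" "t \<in> y"
      using meets by blast
    obtain G' where G': "G' \<in> Fam C B A" "\<forall>x\<in>A. m \<le> Supp C G' x"
      and tight': "tight_set C G' A m = tight_set C G A m - {t}"
      and pos': "\<forall>y\<in>Pow C. \<forall>x\<in>A. 0 < G y x \<longrightarrow> 0 < G' y x"
      using transfer_removes_tight[OF fin(1) less.prems(1,2) t(1) c y t(2) \<open>0 < G y c\<close>] .
    have "finite (tight_set C G A m)"
      using fin(2) by (simp add: tight_set_def)
    then have "card (tight_set C G' A m) < card (tight_set C G A m)"
      unfolding tight' using t(1) by (rule card_Diff1_less)
    moreover have "tight_set C G' A m \<subseteq> tight_set C F A m"
      using tight' less.prems(3) by blast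
    moreover have "\<forall>y\<in>Pow C. \<forall>x\<in>A. 0 < F y x \<longrightarrow> 0 < G' y x"
      using pos' less.prems(4) by blast
    ultimately show ?thesis
      using less.hyps[OF _ G'] by blast
  qed
qed

theorem lemma3:
  fixes V :: "'v set" and C :: "'c set" and S :: nat and B :: "'c set \<Rightarrow> nat"
    and A :: "'c set" and F :: "'c set \<Rightarrow> 'c \<Rightarrow> real"
  assumes "election V C S B"
    and "A \<noteq> {}" and "A \<subseteq> C"
    and "F \<in> Fopt C B A"
  shows "\<exists>K. K \<noteq> {} \<and> K \<subseteq> A
           \<and> (\<forall>c\<in>K. Supp C F c = maxMin C B A)
           \<and> (\<forall>c\<in>A - K. \<forall>y\<in>Pow C. y \<inter> K \<noteq> {} \<longrightarrow> F y c = 0)"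
proof (rule ccontr)
  assume no_K: "\<not> ?thesis"
  let ?m = "maxMin C B A"
  have fin: "finite C" "finite A"
    using assms(1,3) finite_subset by (auto simp: election_def)
  have F: "F \<in> Fam C B A" "\<forall>x\<in>A. ?m \<le> Supp C F x"
    using assms(4) by (auto simp: Fopt_def)
  have leak: "\<exists>c\<in>A - K. \<exists>y\<in>Pow C. y \<inter> K \<noteq> {} \<and> 0 < F y c"
    if K: "K \<noteq> {}" "K \<subseteq> tight_set C F A ?m" for K
  proof -
    have "\<not> (\<forall>c\<in>A - K. \<forall>y\<in>Pow C. y \<inter> K \<noteq> {} \<longrightarrow> F y c = 0)"
      using no_K K unfolding tight_set_def by auto
    then obtain c y where c: "c \<in> A - K" and y: "y \<in> Pow C" "y \<inter> K \<noteq> {}"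
      and "F y c \<noteq> 0"
      by blast
    moreover have "0 \<le> F y c"
      using Fam_nonneg[OF F(1) y(1)] c by blast
    ultimately show ?thesis
      using c y by (auto simp: order_less_le)
  qed
  obtain G where G: "G \<in> Fam C B A" and gt: "\<forall>x\<in>A. ?m < Supp C G x"
    using Fam_Supp_gt_if_tight_sets_leak[OF fin F(1) leak F order_refl] by blast
  have "?m < Min (Supp C G ` A)"
    using fin(2) assms(2) gt by (simp add: Min_gr_iff)
  then show False
    using Min_Supp_le_maxMin[OF fin(1) assms(3,2) G] by simp
qed

end
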